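(* Let $\Gamma\colon\mathbb{R}^d\to\mathbb{R}$ be continuously differentiable with globally Lipschitz gradient, consider the gradient flow $\frac{d}{dt}\vartheta_t=-\nabla\Gamma(\vartheta_t)$ (so $\bar f=-\nabla\Gamma$), and assume the limit $\bar f_\infty(\theta)=\lim_{r\to\infty}r^{-1}\bar f(r\theta)$ exists for every $\theta\in\mathbb{R}^d$. Let $\Gamma_\infty(\theta)=\lim_{r\to\infty}r^{-2}\Gamma(r\theta)$. Suppose that $\Gamma_\infty$ is $C^1$ and $\Gamma_\infty(\theta)>0$ for $\theta\ne0$. Then the ODE@$\infty$, $\frac{d}{dt}\vartheta^\infty_t=\bar f_\infty(\vartheta^\infty_t)$, is exponentially asymptotically stable: there are $B<\infty$ and $\delta>0$ such that for every initial condition $\vartheta^\infty_0\in\mathbb{R}^d$, $$\|\vartheta^\infty_t\|^2\le B\|\vartheta^\infty_0\|^2e^{-\delta t},\qquad t\ge0.$$ Consequently, the gradient flow is ultimately bounded: there is $B'<\infty$ such that every solution satisfies $\|\vartheta_t\|\le B'$ for all sufficiently large $t$. *)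

theory Defs
  imports "HOL-Analysis.Analysis"
begin

end

(*
  By L'Hopital's rule along rays, G x = -(F x \<bullet> x)/2, and G is homogeneous of degree 2;
  being continuous and positive on the unit sphere, it satisfies G x \<ge> m |x|^2 with m > 0.
  Hence x \<bullet> F x \<le> -2m |x|^2, so |x(t)|^2 e^(4mt) is nonincreasing along the ODE at infinity.
  For the gradient flow, the Lipschitz bound makes the functions \<theta> \<mapsto> g(r\<theta>) \<bullet> \<theta> / r
  (r \<ge> 1) equicontinuous on the unit sphere, so their convergence to 2 G is uniform there;
  this gives g x \<bullet> x \<ge> m |x|^2 - C, and then (|y(t)|^2 - C/m) e^(2mt) is nonincreasing.
*)
theory Submission
  imports Defs
begin

lemma nonpos_derivative_within_imp_le_initial:
  fixes W W' :: "real \<Rightarrow> real"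
  assumes deriv: "\<And>t. t \<ge> a \<Longrightarrow> (W has_real_derivative W' t) (at t within {a..})"
    and nonpos: "\<And>t. t \<ge> a \<Longrightarrow> W' t \<le> 0"
    and "t \<ge> a"
  shows "W t \<le> W a"
proof (rule DERIV_nonpos_imp_decreasing_open[OF \<open>t \<ge> a\<close>])
  fix s assume s: "a < s" "s < t"
  have "at s within {a..} = at s"
    by (rule at_within_open_subset[where S="{a<..}"]) (use s in auto)
  with deriv[of s] nonpos[of s] s show "\<exists>y. DERIV W s :> y \<and> y \<le> 0"
    by auto
next
  have "continuous (at s within {a..t}) W" if "s \<in> {a..t}" for s
    using deriv[of s] that
    by (auto intro: DERIV_continuous continuous_within_subset)
  then show "continuous_on {a..t} W"
    by (simp add: continuous_on_eq_continuous_within)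
qed

lemma exp_decay_of_differential_inequality:
  fixes V V' :: "real \<Rightarrow> real"
  assumes deriv: "\<And>t. t \<ge> 0 \<Longrightarrow> (V has_real_derivative V' t) (at t within {0..})"
    and ineq: "\<And>t. t \<ge> 0 \<Longrightarrow> V' t \<le> - a * (V t - c)"
    and "t \<ge> 0"
  shows "V t - c \<le> (V 0 - c) * exp (- a * t)"
proof -
  define W where "W u = (V u - c) * exp (a * u)" for u
  have "W t \<le> W 0"
  proof (rule nonpos_derivative_within_imp_le_initial[OF _ _ \<open>t \<ge> 0\<close>])
    fix u :: real assume "u \<ge> 0"
    show "(W has_real_derivative (V' u + a * (V u - c)) * exp (a * u)) (at u within {0..})"
      unfolding W_def[abs_def] using deriv[OF \<open>u \<ge> 0\<close>]
      by (auto intro!: derivative_eq_intros simp: algebra_simps)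
    show "(V' u + a * (V u - c)) * exp (a * u) \<le> 0"
      using ineq[OF \<open>u \<ge> 0\<close>] by (simp add: mult_nonpos_nonneg)
  qed
  then have "(V t - c) * exp (a * t) * exp (- a * t) \<le> (V 0 - c) * exp (- a * t)"
    unfolding W_def by (intro mult_right_mono) auto
  then show ?thesis
    by (simp add: mult.assoc flip: exp_add)
qed

lemma has_real_derivative_power2_norm:
  fixes x :: "real \<Rightarrow> 'a::real_inner"
  assumes "(x has_vector_derivative v) (at t within S)"
  shows "((\<lambda>t. (norm (x t))\<^sup>2) has_real_derivative 2 * (x t \<bullet> v)) (at t within S)"
proof -
  have "((\<lambda>t. x t \<bullet> x t) has_derivative (\<lambda>h. x t \<bullet> (h *\<^sub>R v) + (h *\<^sub>R v) \<bullet> x t)) (at t within S)"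
    using assms unfolding has_vector_derivative_def by (intro has_derivative_inner)
  moreover have "(\<lambda>h. x t \<bullet> (h *\<^sub>R v) + (h *\<^sub>R v) \<bullet> x t) = (*) (2 * (x t \<bullet> v))"
    by (auto simp: fun_eq_iff inner_commute algebra_simps)
  ultimately show ?thesis
    by (simp add: has_field_derivative_def power2_norm_eq_inner)
qed

lemma norm_power2_bound_of_dissipative:
  fixes f :: "'a::real_inner \<Rightarrow> 'a" and x :: "real \<Rightarrow> 'a"
  assumes ode: "\<And>t. t \<ge> 0 \<Longrightarrow> (x has_vector_derivative f (x t)) (at t within {0..})"
    and dissipative: "\<And>z. z \<bullet> f z \<le> - a * ((norm z)\<^sup>2 - c)"
    and "t \<ge> 0"
  shows "(norm (x t))\<^sup>2 - c \<le> ((norm (x 0))\<^sup>2 - c) * exp (- (2 * a) * t)"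
proof (rule exp_decay_of_differential_inequality[OF _ _ \<open>t \<ge> 0\<close>])
  fix u :: real assume "u \<ge> 0"
  show "((\<lambda>t. (norm (x t))\<^sup>2) has_real_derivative 2 * (x u \<bullet> f (x u))) (at u within {0..})"
    by (rule has_real_derivative_power2_norm[OF ode[OF \<open>u \<ge> 0\<close>]])
  show "2 * (x u \<bullet> f (x u)) \<le> - (2 * a) * ((norm (x u))\<^sup>2 - c)"
    using dissipative[of "x u"] by simp
qed

lemma eventually_norm_le_of_dissipative:
  fixes f :: "'a::real_inner \<Rightarrow> 'a" and x :: "real \<Rightarrow> 'a"
  assumes ode: "\<And>t. t \<ge> 0 \<Longrightarrow> (x has_vector_derivative f (x t)) (at t within {0..})"
    and dissipative: "\<And>z. z \<bullet> f z \<le> - a * ((norm z)\<^sup>2 - c)"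
    and "a > 0"
  shows "\<exists>T. \<forall>t\<ge>T. norm (x t) \<le> sqrt (c + 1)"
proof (intro exI allI impI)
  define T where "T = ln ((norm (x 0))\<^sup>2 + 1) / (2 * a)"
  fix t assume "T \<le> t"
  have "c \<ge> 0"
    using dissipative[of 0] \<open>a > 0\<close> by (simp add: zero_le_mult_iff)
  have "T \<ge> 0"
    unfolding T_def using \<open>a > 0\<close> by simp
  have "(norm (x 0))\<^sup>2 + 1 = exp (2 * a * T)"
    unfolding T_def using \<open>a > 0\<close> by (simp add: add_nonneg_pos)
  also have "\<dots> \<le> exp (2 * a * t)"
    using \<open>T \<le> t\<close> \<open>a > 0\<close> by simp
  finally have "(norm (x 0))\<^sup>2 * exp (- (2 * a) * t) \<le> 1"
    by (simp add: exp_minus field_simps)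
  moreover have "(norm (x t))\<^sup>2 - c \<le> ((norm (x 0))\<^sup>2 - c) * exp (- (2 * a) * t)"
    using norm_power2_bound_of_dissipative[OF ode dissipative] \<open>T \<le> t\<close> \<open>T \<ge> 0\<close> by simp
  moreover have "((norm (x 0))\<^sup>2 - c) * exp (- (2 * a) * t) \<le> (norm (x 0))\<^sup>2 * exp (- (2 * a) * t)"
    using \<open>c \<ge> 0\<close> by (intro mult_right_mono) auto
  ultimately show "norm (x t) \<le> sqrt (c + 1)"
    by (intro real_le_rsqrt) linarith
qed

lemma has_real_derivative_along_ray:
  fixes \<Gamma> :: "'a::real_inner \<Rightarrow> real"
  assumes grad: "\<And>x. (\<Gamma> has_derivative (\<lambda>h. g x \<bullet> h)) (at x)"
  shows "((\<lambda>r. \<Gamma> (r *\<^sub>R \<theta>)) has_real_derivative g (r *\<^sub>R \<theta>) \<bullet> \<theta>) (at r)"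
proof -
  have "((\<lambda>r. r *\<^sub>R \<theta>) has_derivative (\<lambda>h. h *\<^sub>R \<theta>)) (at r)"
    by (auto intro!: derivative_eq_intros)
  from has_derivative_compose[OF this grad] show ?thesis
    unfolding has_field_derivative_def by (simp add: o_def mult_commute_abs)
qed

lemma ray_inner_quotient_tendsto:
  fixes g :: "'a::real_inner \<Rightarrow> 'a"
  assumes "((\<lambda>r. (- g (r *\<^sub>R \<theta>)) /\<^sub>R r) \<longlongrightarrow> v) at_top"
  shows "((\<lambda>r. g (r *\<^sub>R \<theta>) \<bullet> \<theta> / r) \<longlongrightarrow> - (v \<bullet> \<theta>)) at_top"
proof -
  have "((\<lambda>r. - (((- g (r *\<^sub>R \<theta>)) /\<^sub>R r) \<bullet> \<theta>)) \<longlongrightarrow> - (v \<bullet> \<theta>)) at_top"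
    by (intro tendsto_minus tendsto_inner assms tendsto_const)
  then show ?thesis
    by (simp add: divide_inverse mult.commute)
qed

lemma potential_over_square_tendsto:
  fixes \<Gamma> :: "'a::real_inner \<Rightarrow> real"
  assumes grad: "\<And>x. (\<Gamma> has_derivative (\<lambda>h. g x \<bullet> h)) (at x)"
    and lim: "((\<lambda>r. g (r *\<^sub>R \<theta>) \<bullet> \<theta> / r) \<longlongrightarrow> l) at_top"
  shows "((\<lambda>r. \<Gamma> (r *\<^sub>R \<theta>) / r\<^sup>2) \<longlongrightarrow> l / 2) at_top"
proof (rule lhospital_at_top_at_top[where g'="\<lambda>r. 2 * r" and f'="\<lambda>r. g (r *\<^sub>R \<theta>) \<bullet> \<theta>"])
  show "filterlim (\<lambda>r::real. r\<^sup>2) at_top at_top"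
    by (simp add: filterlim_pow_at_top filterlim_ident)
  show "\<forall>\<^sub>F r in at_top. 2 * r \<noteq> (0::real)"
    using eventually_gt_at_top[of "0::real"] by eventually_elim auto
  show "\<forall>\<^sub>F r in at_top. ((\<lambda>r. \<Gamma> (r *\<^sub>R \<theta>)) has_real_derivative g (r *\<^sub>R \<theta>) \<bullet> \<theta>) (at r)"
    by (intro always_eventually allI has_real_derivative_along_ray[OF grad])
  show "\<forall>\<^sub>F r in at_top. ((\<lambda>r. r\<^sup>2) has_real_derivative 2 * r) (at r)"
    by (intro always_eventually allI) (auto intro!: derivative_eq_intros)
  show "((\<lambda>r. g (r *\<^sub>R \<theta>) \<bullet> \<theta> / (2 * r)) \<longlongrightarrow> l / 2) at_top"
    using tendsto_divide[OF lim tendsto_const[of 2]] by (simp add: field_simps)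
qed

lemma tendsto_over_square_homogeneous:
  fixes \<Gamma> :: "'a::real_normed_vector \<Rightarrow> real"
  assumes lim: "\<And>\<theta>. ((\<lambda>r. \<Gamma> (r *\<^sub>R \<theta>) / r\<^sup>2) \<longlongrightarrow> G \<theta>) at_top"
    and "k > 0"
  shows "G (k *\<^sub>R \<theta>) = k\<^sup>2 * G \<theta>"
proof -
  have "filterlim (\<lambda>r. r * k) at_top at_top"
    by (rule filterlim_at_top_mult_tendsto_pos[OF tendsto_const \<open>k > 0\<close> filterlim_ident])
  from tendsto_mult_left[OF filterlim_compose[OF lim[of \<theta>] this], of "k\<^sup>2"]
  have "((\<lambda>r. k\<^sup>2 * (\<Gamma> ((r * k) *\<^sub>R \<theta>) / (r * k)\<^sup>2)) \<longlongrightarrow> k\<^sup>2 * G \<theta>) at_top"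
    by (simp add: o_def)
  moreover have "\<forall>\<^sub>F r in at_top. k\<^sup>2 * (\<Gamma> ((r * k) *\<^sub>R \<theta>) / (r * k)\<^sup>2) = \<Gamma> (r *\<^sub>R (k *\<^sub>R \<theta>)) / r\<^sup>2"
    using eventually_gt_at_top[of "0::real"]
    by eventually_elim (use \<open>k > 0\<close> in \<open>simp add: power_mult_distrib\<close>)
  ultimately have "((\<lambda>r. \<Gamma> (r *\<^sub>R (k *\<^sub>R \<theta>)) / r\<^sup>2) \<longlongrightarrow> k\<^sup>2 * G \<theta>) at_top"
    by (rule Lim_transform_eventually)
  from tendsto_unique[OF _ lim this] show ?thesis
    by simp
qed

lemma quadratic_lower_bound_of_homogeneous:
  fixes G :: "'a::euclidean_space \<Rightarrow> real"
  assumes cont: "continuous_on (sphere 0 1) G"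
    and homogeneous: "\<And>k x. k > 0 \<Longrightarrow> G (k *\<^sub>R x) = k\<^sup>2 * G x"
    and pos: "\<And>x. x \<noteq> 0 \<Longrightarrow> G x > 0"
  shows "\<exists>m>0. \<forall>x. m * (norm x)\<^sup>2 \<le> G x"
proof -
  obtain \<theta> where \<theta>: "\<theta> \<in> sphere 0 1" and min: "\<And>\<phi>. \<phi> \<in> sphere 0 1 \<Longrightarrow> G \<theta> \<le> G \<phi>"
    using continuous_attains_inf[OF compact_sphere _ cont] by auto
  have "G \<theta> > 0"
    using \<theta> pos[of \<theta>] by fastforce
  moreover have "G \<theta> * (norm x)\<^sup>2 \<le> G x" for x
  proof (cases "x = 0")
    case True
    then show ?thesis
      using homogeneous[of 2 0] by simp
  next
    case False
    then have "G x = (norm x)\<^sup>2 * G (x /\<^sub>R norm x)"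
      using homogeneous[of "norm x" "x /\<^sub>R norm x"] by simp
    moreover have "G \<theta> \<le> G (x /\<^sub>R norm x)"
      using min False by simp
    ultimately show ?thesis
      by (metis mult.commute mult_right_mono zero_le_power2)
  qed
  ultimately show ?thesis
    by blast
qed

lemma eventually_uniform_lower_bound_on_compact:
  fixes f :: "'b \<Rightarrow> 'a::metric_space \<Rightarrow> real"
  assumes "compact S" and "d > 0"
    and pointwise: "\<And>\<theta>. \<theta> \<in> S \<Longrightarrow> \<forall>\<^sub>F r in F. f r \<theta> > c"
    and equicont: "\<forall>\<^sub>F r in F. \<forall>\<theta>\<in>S. \<forall>\<theta>'\<in>S. dist \<theta> \<theta>' < d \<longrightarrow> f r \<theta> - e \<le> f r \<theta>'"
  shows "\<forall>\<^sub>F r in F. \<forall>\<theta>\<in>S. f r \<theta> > c - e"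
proof -
  have "S \<subseteq> (\<Union>\<theta>\<in>S. ball \<theta> d)"
    using \<open>d > 0\<close> by auto
  then obtain D where D: "D \<subseteq> S" "finite D" "S \<subseteq> (\<Union>\<theta>\<in>D. ball \<theta> d)"
    using compactE_image[OF \<open>compact S\<close>] by (metis open_ball)
  have "\<forall>\<^sub>F r in F. \<forall>\<theta>\<in>D. f r \<theta> > c"
    using D(1) pointwise by (intro eventually_ball_finite[OF D(2)]) auto
  with equicont show ?thesis
  proof eventually_elim
    case (elim r)
    show ?case
    proof
      fix \<theta>' assume "\<theta>' \<in> S"
      then obtain \<theta> where "\<theta> \<in> D" "dist \<theta> \<theta>' < d"
        using D(3) by auto
      then show "f r \<theta>' > c - e"
        using elim D(1) \<open>\<theta>' \<in> S\<close> by fastforce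
    qed
  qed
qed

lemma norm_le_of_lipschitz:
  fixes g :: "'a::real_normed_vector \<Rightarrow> 'b::real_normed_vector"
  assumes lip: "\<And>x y. norm (g x - g y) \<le> L * norm (x - y)"
  shows "norm (g x) \<le> norm (g 0) + L * norm x"
  using norm_triangle_sub[of "g x" "g 0"] lip[of x 0] by simp

lemma ray_inner_quotient_lipschitz:
  fixes g :: "'a::real_inner \<Rightarrow> 'a"
  assumes lip: "\<And>x y. norm (g x - g y) \<le> L * norm (x - y)" and "L \<ge> 0"
    and "norm \<theta> = 1" "norm \<theta>' = 1" "r \<ge> 1"
  shows "g (r *\<^sub>R \<theta>) \<bullet> \<theta> / r - (2 * L + norm (g 0)) * norm (\<theta> - \<theta>') \<le> g (r *\<^sub>R \<theta>') \<bullet> \<theta>' / r"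
proof -
  let ?d = "norm (\<theta> - \<theta>')"
  have "g (r *\<^sub>R \<theta>) \<bullet> \<theta> - g (r *\<^sub>R \<theta>') \<bullet> \<theta>'
      = (g (r *\<^sub>R \<theta>) - g (r *\<^sub>R \<theta>')) \<bullet> \<theta> + g (r *\<^sub>R \<theta>') \<bullet> (\<theta> - \<theta>')"
    by (simp add: inner_diff_left inner_diff_right)
  also have "\<dots> \<le> norm (g (r *\<^sub>R \<theta>) - g (r *\<^sub>R \<theta>')) + norm (g (r *\<^sub>R \<theta>')) * ?d"
    using norm_cauchy_schwarz[of "g (r *\<^sub>R \<theta>) - g (r *\<^sub>R \<theta>')" \<theta>]
      norm_cauchy_schwarz[of "g (r *\<^sub>R \<theta>')" "\<theta> - \<theta>'"] \<open>norm \<theta> = 1\<close>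
    by simp
  also have "\<dots> \<le> L * (r * ?d) + (norm (g 0) + L * r) * ?d"
  proof (rule add_mono)
    show "norm (g (r *\<^sub>R \<theta>) - g (r *\<^sub>R \<theta>')) \<le> L * (r * ?d)"
      using lip[of "r *\<^sub>R \<theta>" "r *\<^sub>R \<theta>'"] \<open>r \<ge> 1\<close> by (simp flip: scaleR_diff_right)
    show "norm (g (r *\<^sub>R \<theta>')) * ?d \<le> (norm (g 0) + L * r) * ?d"
      using norm_le_of_lipschitz[OF lip, of "r *\<^sub>R \<theta>'"] \<open>norm \<theta>' = 1\<close> \<open>r \<ge> 1\<close>
      by (intro mult_right_mono) auto
  qed
  also have "\<dots> \<le> r * ((2 * L + norm (g 0)) * ?d)"
    using \<open>r \<ge> 1\<close> mult_right_mono[of 1 r "norm (g 0) * ?d"] by (simp add: algebra_simps)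
  finally have "(g (r *\<^sub>R \<theta>) \<bullet> \<theta> - g (r *\<^sub>R \<theta>') \<bullet> \<theta>') / r \<le> (2 * L + norm (g 0)) * ?d"
    using \<open>r \<ge> 1\<close> by (simp add: pos_divide_le_eq mult.commute)
  then show ?thesis
    by (simp add: diff_divide_distrib)
qed

lemma inner_ge_quadratic_minus_const:
  fixes g :: "'a::euclidean_space \<Rightarrow> 'a"
  assumes lip: "\<And>x y. norm (g x - g y) \<le> L * norm (x - y)" and "L \<ge> 0"
    and lim: "\<And>\<theta>. ((\<lambda>r. g (r *\<^sub>R \<theta>) \<bullet> \<theta> / r) \<longlongrightarrow> h \<theta>) at_top"
    and bound: "\<And>\<theta>. norm \<theta> = 1 \<Longrightarrow> m \<le> h \<theta>" and "m' < m"
  shows "\<exists>C. \<forall>x. m' * (norm x)\<^sup>2 - C \<le> g x \<bullet> x"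
proof -
  define e where "e = (m - m') / 2"
  define K where "K = 2 * L + norm (g 0) + 1"
  have "e > 0" "K > 0"
    using \<open>m' < m\<close> \<open>L \<ge> 0\<close> by (simp_all add: e_def K_def add_nonneg_pos)
  have "\<forall>\<^sub>F r in at_top. \<forall>\<theta>\<in>sphere 0 1. g (r *\<^sub>R \<theta>) \<bullet> \<theta> / r > (m - e) - e"
  proof (rule eventually_uniform_lower_bound_on_compact[OF compact_sphere, of "e / K"])
    show "e / K > 0"
      using \<open>e > 0\<close> \<open>K > 0\<close> by simp
    show "\<forall>\<^sub>F r in at_top. g (r *\<^sub>R \<theta>) \<bullet> \<theta> / r > m - e" if "\<theta> \<in> sphere 0 1" for \<theta>
      using order_tendstoD(1)[OF lim, of "m - e" \<theta>] bound[of \<theta>] that \<open>e > 0\<close> by simp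
    show "\<forall>\<^sub>F r in at_top. \<forall>\<theta>\<in>sphere 0 1. \<forall>\<theta>'\<in>sphere 0 1. dist \<theta> \<theta>' < e / K \<longrightarrow>
            g (r *\<^sub>R \<theta>) \<bullet> \<theta> / r - e \<le> g (r *\<^sub>R \<theta>') \<bullet> \<theta>' / r"
      using eventually_ge_at_top[of "1::real"]
    proof eventually_elim
      case (elim r)
      show ?case
      proof (intro ballI impI)
        fix \<theta> \<theta>' :: 'a assume \<theta>: "\<theta> \<in> sphere 0 1" "\<theta>' \<in> sphere 0 1" and "dist \<theta> \<theta>' < e / K"
        then have "(2 * L + norm (g 0)) * norm (\<theta> - \<theta>') \<le> K * (e / K)"
          using \<open>L \<ge> 0\<close> by (intro mult_mono) (auto simp: K_def dist_norm)
        then show "g (r *\<^sub>R \<theta>) \<bullet> \<theta> / r - e \<le> g (r *\<^sub>R \<theta>') \<bullet> \<theta>' / r"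
          using ray_inner_quotient_lipschitz[OF lip \<open>L \<ge> 0\<close> _ _ elim, of \<theta> \<theta>'] \<theta> \<open>K > 0\<close> by simp
      qed
    qed
  qed
  then obtain R where R: "\<forall>r\<ge>R. \<forall>\<theta>\<in>sphere 0 1. m' < g (r *\<^sub>R \<theta>) \<bullet> \<theta> / r"
    by (auto simp: eventually_at_top_linorder e_def)
  define R1 where "R1 = max R 1"
  define C where "C = \<bar>m'\<bar> * R1\<^sup>2 + (norm (g 0) + L * R1) * R1"
  have "m' * (norm x)\<^sup>2 - C \<le> g x \<bullet> x" for x
  proof (cases "norm x \<ge> R1")
    case True
    then have "norm x > 0"
      unfolding R1_def by linarith
    have "m' < g (norm x *\<^sub>R (x /\<^sub>R norm x)) \<bullet> (x /\<^sub>R norm x) / norm x"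
      using R[rule_format, of "norm x" "x /\<^sub>R norm x"] True \<open>norm x > 0\<close> by (simp add: R1_def)
    then have "m' < g x \<bullet> x / (norm x)\<^sup>2"
      using \<open>norm x > 0\<close> by (simp add: power2_eq_square field_simps)
    then have "m' * (norm x)\<^sup>2 \<le> g x \<bullet> x"
      using \<open>norm x > 0\<close> by (simp add: pos_less_divide_eq)
    moreover have "C \<ge> 0"
      using \<open>L \<ge> 0\<close> by (simp add: C_def R1_def)
    ultimately show ?thesis
      by linarith
  next
    case False
    have "m' * (norm x)\<^sup>2 \<le> \<bar>m'\<bar> * R1\<^sup>2"
      using False by (intro mult_mono power_mono) auto
    moreover have "- (g x \<bullet> x) \<le> norm (g x) * norm x"
      using norm_cauchy_schwarz[of "- g x" x] by simp
    moreover have "norm (g x) \<le> norm (g 0) + L * R1"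
      using norm_le_of_lipschitz[OF lip, of x] mult_left_mono[of "norm x" R1 L] False \<open>L \<ge> 0\<close>
      by linarith
    then have "norm (g x) * norm x \<le> (norm (g 0) + L * R1) * R1"
      using False by (intro mult_mono) (auto intro: order_trans[OF norm_ge_zero])
    ultimately show ?thesis
      unfolding C_def by linarith
  qed
  then show ?thesis
    by blast
qed

theorem proposition2p11:
  fixes \<Gamma> :: "'a::euclidean_space \<Rightarrow> real"
    and g :: "'a \<Rightarrow> 'a"
    and F :: "'a \<Rightarrow> 'a"
    and G :: "'a \<Rightarrow> real"
  assumes grad: "\<And>x. (\<Gamma> has_derivative (\<lambda>h. g x \<bullet> h)) (at x)"
    and grad_cont: "continuous_on UNIV g"
    and grad_lip: "\<exists>L. \<forall>x y. norm (g x - g y) \<le> L * norm (x - y)"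
    and F_lim: "\<And>\<theta>. ((\<lambda>r. (- g (r *\<^sub>R \<theta>)) /\<^sub>R r) \<longlongrightarrow> F \<theta>) at_top"
    and G_lim: "\<And>\<theta>. ((\<lambda>r. \<Gamma> (r *\<^sub>R \<theta>) / r\<^sup>2) \<longlongrightarrow> G \<theta>) at_top"
    and G_C1: "\<exists>G'. (\<forall>x. (G has_derivative (\<lambda>h. G' x \<bullet> h)) (at x)) \<and> continuous_on UNIV G'"
    and G_pos: "\<And>\<theta>. \<theta> \<noteq> 0 \<Longrightarrow> G \<theta> > 0"
  shows "(\<exists>B \<delta>. \<delta> > 0 \<and>
            (\<forall>x :: real \<Rightarrow> 'a.
               (\<forall>t\<ge>0. (x has_vector_derivative F (x t)) (at t within {0..})) \<longrightarrow>
               (\<forall>t\<ge>0. (norm (x t))\<^sup>2 \<le> B * (norm (x 0))\<^sup>2 * exp (- \<delta> * t))))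
       \<and> (\<exists>B'. \<forall>y :: real \<Rightarrow> 'a.
               (\<forall>t\<ge>0. (y has_vector_derivative (- g (y t))) (at t within {0..})) \<longrightarrow>
               (\<exists>T. \<forall>t\<ge>T. norm (y t) \<le> B'))"
proof -
  obtain L where "\<forall>x y. norm (g x - g y) \<le> L * norm (x - y)"
    using grad_lip by blast
  then have lip: "norm (g x - g y) \<le> \<bar>L\<bar> * norm (x - y)" for x y
    by (meson abs_ge_self mult_right_mono norm_ge_zero order_trans)
  have ray_lim: "((\<lambda>r. g (r *\<^sub>R \<theta>) \<bullet> \<theta> / r) \<longlongrightarrow> - (F \<theta> \<bullet> \<theta>)) at_top" for \<theta>
    by (rule ray_inner_quotient_tendsto[OF F_lim])
  have G_eq: "G \<theta> = - (F \<theta> \<bullet> \<theta>) / 2" for \<theta>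
    using tendsto_unique[OF _ G_lim potential_over_square_tendsto[OF grad ray_lim]] by simp
  have "continuous_on (sphere 0 1) G"
    using G_C1 has_derivative_continuous by (metis continuous_at_imp_continuous_on)
  then obtain m where "m > 0" and G_ge: "\<And>x. m * (norm x)\<^sup>2 \<le> G x"
    using quadratic_lower_bound_of_homogeneous[OF _ tendsto_over_square_homogeneous[OF G_lim] G_pos]
    by blast
  have F_dissipative: "z \<bullet> F z \<le> - (2 * m) * ((norm z)\<^sup>2 - 0)" for z
    using G_eq[of z] G_ge[of z] by (simp add: inner_commute)
  have exp_stable: "(norm (x t))\<^sup>2 \<le> 1 * (norm (x 0))\<^sup>2 * exp (- (4 * m) * t)"
    if "\<forall>t\<ge>0. (x has_vector_derivative F (x t)) (at t within {0..})" and "t \<ge> 0" for x t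
    using norm_power2_bound_of_dissipative[OF _ F_dissipative \<open>t \<ge> 0\<close>] that by simp
  have "2 * m \<le> - (F \<theta> \<bullet> \<theta>)" if "norm \<theta> = 1" for \<theta>
    using G_eq[of \<theta>] G_ge[of \<theta>] that by simp
  then obtain C where C: "\<And>x. m * (norm x)\<^sup>2 - C \<le> g x \<bullet> x"
    using inner_ge_quadratic_minus_const[OF lip abs_ge_zero ray_lim, of "2 * m" m] \<open>m > 0\<close>
    by auto
  have g_dissipative: "z \<bullet> - g z \<le> - m * ((norm z)\<^sup>2 - C / m)" for z
    using C[of z] \<open>m > 0\<close> by (simp add: algebra_simps inner_commute)
  have bounded: "\<exists>T. \<forall>t\<ge>T. norm (y t) \<le> sqrt (C / m + 1)"
    if "\<forall>t\<ge>0. (y has_vector_derivative (- g (y t))) (at t within {0..})" for y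
    using eventually_norm_le_of_dissipative[OF _ g_dissipative \<open>m > 0\<close>] that by simp
  show ?thesis
    using exp_stable bounded \<open>m > 0\<close> by (metis mult_pos_pos zero_less_numeral)
qed

end
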